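(* Let $N\ge2$, $\xi=\exp(\pi\sqrt{-1}/N)$, and let $V_1,V_2$ each be one of the $\mathcal U_q(sl_2)$-modules $W_m$ ($m\ge1$) or $\mathcal Y_m^{\pm}$ ($1\le m\le N-1$). For generic $q$ the universal $R$-matrix $R=q^{\frac12H\otimes H}\sum_{n\ge0}\frac{\{1\}_q^{2n}}{\{n\}_q!}q^{\frac{n(n-1)}2}E^n\otimes F^n$ acts on $V_1\otimes V_2$, and this action can be specialized at $q=\xi$ (its matrix entries have well-defined values at $q=\xi$). The resulting action coincides with the action of the $R$-matrix $\xi^{\frac12H\otimes H}\sum_{n=0}^{N-1}\frac{\{1\}^{2n}}{\{n\}!}\xi^{\frac{n(n-1)}2}E^n\otimes F^n$ of $\overline{\mathcal U}_\xi(sl_2)$ on the specialized modules.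
   Context: $\{n\}_q=q^n-q^{-n}$, $\{n\}_q!=\prod_{k=1}^n\{k\}_q$, $[n]_q=\{n\}_q/\{1\}_q$, $[n]_q!=\prod_{k=1}^n[k]_q$, $\left[\begin{smallmatrix}n\\ k\end{smallmatrix}\right]_q=\frac{[n]_q!}{[k]_q![n-k]_q!}$; $\{n\}$, $\{n\}!$ are values at $q=\xi$; $\xi^{1/2}=e^{\pi\sqrt{-1}/2N}$. $\mathcal U_q(sl_2)$ is the Hopf algebra generated by $K^{\pm1},E,F$ with $KEK^{-1}=q^2E$, $KFK^{-1}=q^{-2}F$, $EF-FE=(K-K^{-1})/(q-q^{-1})$, $\Delta(K)=K\otimes K$, $\Delta(E)=1\otimes E+E\otimes K$, $\Delta(F)=K^{-1}\otimes F+F\otimes 1$; $H$ is an element with $q^H=K$ (acting on a weight vector of $K$-eigenvalue $q^h$ by $h$). $\overline{\mathcal U}_\xi(sl_2)=\mathcal U_\xi(sl_2)/(E^N,F^N,K^{2N}-1)$, and in its $R$-matrix $H$ acts on weight vectors with $\xi^H=K$, $HE-EH=2E$, $HF-FH=-2F$, and $Hv=0$ whenever $Kv=v$. $W_m$: basis $f_0,\dots,f_{m-1}$, $Ef_i=[i]_qf_{i-1}$, $Ff_i=[m-1-i]_qf_{i+1}$, $Kf_i=q^{m-1-2i}f_i$. $\mathcal Y_m^+$: basis $\alpha_0,\dots,\alpha_{2N-m-1},\beta_0,\dots,\beta_{m-1}$, with $E\alpha_i=[i]_q\alpha_{i-1}$ for $i\le N-m$ or $i\ge N+1$, $E\alpha_i=[i]_q\alpha_{i-1}+\left[\begin{smallmatrix}2N-m-i-1\\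 N-i\end{smallmatrix}\right]_q\beta_{m-N+i-1}$ for $N-m+1\le i\le N$, $E\beta_i=[i]_q\beta_{i-1}$, $F\alpha_i=[2N-m-i-1]_q\alpha_{i+1}$ for $i\ne N-m-1$, $F\alpha_{N-m-1}=[N]_q\alpha_{N-m}+\left[\begin{smallmatrix}N-1\\ m-1\end{smallmatrix}\right]_q\beta_0$, $F\beta_i=[m-i-1]_q\beta_{i+1}$, $K\alpha_i=q^{2N-m-1-2i}\alpha_i$, $K\beta_i=q^{m-1-2i}\beta_i$. $\mathcal Y_m^-$: basis $\alpha_0,\dots,\alpha_{2N+m-1},\beta_0,\dots,\beta_{2N-m-1}$, with $E\alpha_i=[i]_q\alpha_{i-1}$ for $i\le m$ or $i\ge2N+1$, $E\alpha_i=[i]_q\alpha_{i-1}+\left[\begin{smallmatrix}2N+m-1-i\\ 2N-i\end{smallmatrix}\right]_q\beta_{i-m-1}$ for $m+1\le i\le 2N$, $E\beta_i=[i]_q\beta_{i-1}$, $F\alpha_i=[2N+m-1-i]_q\alpha_{i+1}$ for $i\ne m-1$, $F\alpha_{m-1}=[2N]_q\alpha_m+\left[\begin{smallmatrix}2N-1\\ 2N-m-1\end{smallmatrix}\right]_q\beta_0$, $F\beta_i=[2N-m-1-i]_q\beta_{i+1}$, $K\alpha_i=q^{2N+m-1-2i}\alpha_i$, $K\beta_i=q^{2N-m-1-2i}\beta_i$ (indices out of range give $0$). *)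

theory Defs
  imports "HOL-Analysis.Analysis"
begin

definition qcurly :: "nat \<Rightarrow> complex \<Rightarrow> complex" where
  "qcurly n q = q ^ n - inverse q ^ n"

definition qcurly_fact :: "nat \<Rightarrow> complex \<Rightarrow> complex" where
  "qcurly_fact n q = (\<Prod>k=1..n. qcurly k q)"

definition qint :: "nat \<Rightarrow> complex \<Rightarrow> complex" where
  "qint n q = qcurly n q / qcurly 1 q"

definition qint_fact :: "nat \<Rightarrow> complex \<Rightarrow> complex" where
  "qint_fact n q = (\<Prod>k=1..n. qint k q)"

definition qbinom :: "nat \<Rightarrow> nat \<Rightarrow> complex \<Rightarrow> complex" where
  "qbinom n k q = qint_fact n q / (qint_fact k q * qint_fact (n - k) q)"

datatype qmod = W nat | Yp nat | Ym nat

fun admissible :: "nat \<Rightarrow> qmod \<Rightarrow> bool" where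
  "admissible N (W m) = (1 \<le> m)"
| "admissible N (Yp m) = (1 \<le> m \<and> m \<le> N - 1)"
| "admissible N (Ym m) = (1 \<le> m \<and> m \<le> N - 1)"

text \<open>Basis indexing: W_m: f_i = index i.
  Y_m^+: alpha_i = index i (i < 2N-m), beta_k = index 2N-m+k (k < m).
  Y_m^-: alpha_i = index i (i < 2N+m), beta_k = index 2N+m+k (k < 2N-m).\<close>
fun qdim :: "nat \<Rightarrow> qmod \<Rightarrow> nat" where
  "qdim N (W m) = m"
| "qdim N (Yp m) = 2*N"
| "qdim N (Ym m) = 4*N"

text \<open>Weight h of basis vector j (K acts by q^h).\<close>
fun qwt :: "nat \<Rightarrow> qmod \<Rightarrow> nat \<Rightarrow> int" where
  "qwt N (W m) j = int m - 1 - 2 * int j"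
| "qwt N (Yp m) j = (if j < 2*N - m then int (2*N) - int m - 1 - 2 * int j
                     else int m - 1 - 2 * int (j - (2*N - m)))"
| "qwt N (Ym m) j = (if j < 2*N + m then int (2*N) + int m - 1 - 2 * int j
                     else int (2*N) - int m - 1 - 2 * int (j - (2*N + m)))"

text \<open>Ematq N V q i j = coefficient of basis vector i in E (basis vector j).\<close>
fun Ematq :: "nat \<Rightarrow> qmod \<Rightarrow> complex \<Rightarrow> nat \<Rightarrow> nat \<Rightarrow> complex" where
  "Ematq N (W m) q i j = (if j < m \<and> i + 1 = j then qint j q else 0)"
| "Ematq N (Yp m) q i j =
     (let A = 2*N - m in
      if j < A then
        (if i + 1 = j then qint j q else 0)
        + (if N - m + 1 \<le> j \<and> j \<le> N \<and> i = A + (m + j - N - 1)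
           then qbinom (2*N - m - j - 1) (N - j) q else 0)
      else if j < A + m then
        (if A \<le> i \<and> i + 1 = j then qint (j - A) q else 0)
      else 0)"
| "Ematq N (Ym m) q i j =
     (let A = 2*N + m in
      if j < A then
        (if i + 1 = j then qint j q else 0)
        + (if m + 1 \<le> j \<and> j \<le> 2*N \<and> i = A + (j - m - 1)
           then qbinom (2*N + m - 1 - j) (2*N - j) q else 0)
      else if j < A + (2*N - m) then
        (if A \<le> i \<and> i + 1 = j then qint (j - A) q else 0)
      else 0)"

text \<open>Fmatq N V q i j = coefficient of basis vector i in F (basis vector j).
  (Note F alpha_{N-m-1} on Y_m^+ has alpha-coefficient [N] = [2N-m-(N-m-1)-1],
   and similarly for Y_m^-, so the alpha-part is uniform.)\<close>
fun Fmatq :: "nat \<Rightarrow> qmod \<Rightarrow> complex \<Rightarrow> nat \<Rightarrow> nat \<Rightarrow> complex" where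
  "Fmatq N (W m) q i j = (if i < m \<and> i = j + 1 then qint (m - 1 - j) q else 0)"
| "Fmatq N (Yp m) q i j =
     (let A = 2*N - m in
      if j < A then
        (if i < A \<and> i = j + 1 then qint (2*N - m - j - 1) q else 0)
        + (if j = N - m - 1 \<and> i = A then qbinom (N - 1) (m - 1) q else 0)
      else if j < A + m then
        (if i < A + m \<and> i = j + 1 then qint (m - (j - A) - 1) q else 0)
      else 0)"
| "Fmatq N (Ym m) q i j =
     (let A = 2*N + m in
      if j < A then
        (if i < A \<and> i = j + 1 then qint (2*N + m - 1 - j) q else 0)
        + (if j = m - 1 \<and> i = A then qbinom (2*N - 1) (2*N - m - 1) q else 0)
      else if j < A + (2*N - m) then
        (if i < A + (2*N - m) \<and> i = j + 1 then qint (2*N - m - 1 - (j - A)) q else 0)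
      else 0)"

fun mpow :: "nat \<Rightarrow> (nat \<Rightarrow> nat \<Rightarrow> complex) \<Rightarrow> nat \<Rightarrow> nat \<Rightarrow> nat \<Rightarrow> complex" where
  "mpow d M 0 i j = (if i = j then 1 else 0)"
| "mpow d M (Suc n) i j = (\<Sum>k<d. M i k * mpow d M n k j)"

definition xi :: "nat \<Rightarrow> complex" where
  "xi N = exp (pi * \<i> / of_nat N)"

definition xi_half :: "nat \<Rightarrow> complex" where
  "xi_half N = exp (pi * \<i> / of_nat (2 * N))"

text \<open>Specialized modules: matrix entries at q = xi are the values at q = xi of
  the (rational, removable-singularity) entries, i.e. their limits.\<close>
definition Emat_spec :: "nat \<Rightarrow> qmod \<Rightarrow> nat \<Rightarrow> nat \<Rightarrow> complex" where
  "Emat_spec N V i j = Lim (at (xi N)) (\<lambda>q. Ematq N V q i j)"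

definition Fmat_spec :: "nat \<Rightarrow> qmod \<Rightarrow> nat \<Rightarrow> nat \<Rightarrow> complex" where
  "Fmat_spec N V i j = Lim (at (xi N)) (\<lambda>q. Fmatq N V q i j)"

definition Rcoef :: "nat \<Rightarrow> complex \<Rightarrow> complex" where
  "Rcoef n q = qcurly 1 q ^ (2*n) / qcurly_fact n q * q ^ (n * (n - 1) div 2)"

text \<open>Generic R-matrix entry on V1 \<otimes> V2, as a function of s = q^{1/2}:
  coefficient of f_{i1} \<otimes> f_{i2} in R (f_{j1} \<otimes> f_{j2}), where
  q^{H\<otimes>H/2} acts on f_{i1} \<otimes> f_{i2} by s^{h1 h2}.\<close>
definition Rgen :: "nat \<Rightarrow> qmod \<Rightarrow> qmod \<Rightarrow> complex \<Rightarrow> nat \<Rightarrow> nat \<Rightarrow> nat \<Rightarrow> nat \<Rightarrow> complex" where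
  "Rgen N V1 V2 s i1 i2 j1 j2 =
     s powi (qwt N V1 i1 * qwt N V2 i2) *
     (\<Sum>n. Rcoef n (s^2) * mpow (qdim N V1) (Ematq N V1 (s^2)) n i1 j1
                        * mpow (qdim N V2) (Fmatq N V2 (s^2)) n i2 j2)"

text \<open>R-matrix of the restricted quantum group at q = xi acting on the specialized
  modules (H acts on the weight vector f_i by its weight h_i, xi^H = K).\<close>
definition Rres :: "nat \<Rightarrow> qmod \<Rightarrow> qmod \<Rightarrow> nat \<Rightarrow> nat \<Rightarrow> nat \<Rightarrow> nat \<Rightarrow> complex" where
  "Rres N V1 V2 i1 i2 j1 j2 =
     xi_half N powi (qwt N V1 i1 * qwt N V2 i2) *
     (\<Sum>n<N. Rcoef n (xi N) * mpow (qdim N V1) (Emat_spec N V1) n i1 j1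
                        * mpow (qdim N V2) (Fmat_spec N V2) n i2 j2)"

end

theory Submission
  imports Defs "HOL-Complex_Analysis.Cauchy_Integral_Formula"
begin

text \<open>
  Near \<open>q = \<xi>\<close> the matrices of \<open>E\<close> and \<open>F\<close> on each module are holomorphic in \<open>q\<close>
  (after cancelling the removable singularities of the \<open>q\<close>-binomials), and at \<open>q = \<xi>\<close>
  they satisfy \<open>E\<^sup>N = F\<^sup>N = 0\<close>. Hence the \<open>n\<close>-th powers vanish to order \<open>n div N\<close> at \<open>\<xi>\<close>,
  while the coefficient \<open>{1}\<^sup>2\<^sup>n / {n}!\<close> has a pole of order at most \<open>n div N\<close>. So the terms
  with \<open>n < N\<close> converge to the restricted \<open>R\<close>-matrix terms and those with \<open>n \<ge> N\<close> tend
  to \<open>0\<close>; the sum itself is finite because \<open>E\<close> is nilpotent for every \<open>q\<close>.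
\<close>

section \<open>Quantum integers at the root of unity\<close>

lemma xi_nonzero: "xi N \<noteq> 0"
  by (simp add: xi_def)

lemma xi_power: "xi N ^ k = exp (of_nat k * (pi * \<i> / of_nat N))"
  by (simp only: xi_def exp_of_nat_mult)

lemma xi_power_N: assumes "0 < N" shows "xi N ^ N = -1"
proof -
  have "xi N ^ N = exp (pi * \<i>)" using assms by (simp add: xi_power)
  also have "\<dots> = -1" by (simp add: exp_pi_i')
  finally show ?thesis .
qed

lemma xi_power_double_eq_1_iff: assumes "0 < N" shows "xi N ^ (2*k) = 1 \<longleftrightarrow> N dvd k"
proof -
  have "xi N ^ (2*k) = exp (complex_of_real (2 * real k * pi / real N) * \<i>)"
    by (simp add: xi_power field_simps)
  also have "\<dots> = 1 \<longleftrightarrow> (\<exists>n::int. 2 * real k * pi / real N = of_int (2 * n) * pi)"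
    by (subst exp_eq_1) simp
  also have "\<dots> \<longleftrightarrow> N dvd k"
  proof
    assume "\<exists>n::int. 2 * real k * pi / real N = of_int (2 * n) * pi"
    then obtain n :: int where "2 * real k * pi / real N = of_int (2 * n) * pi" by blast
    then have "real k = of_int n * real N" using assms by (simp add: field_simps)
    then have "int k = n * int N" by (metis of_int_eq_iff of_int_mult of_int_of_nat_eq)
    then have "int N dvd int k" by simp
    then show "N dvd k" by simp
  next
    assume "N dvd k"
    then obtain t where "k = N * t" by blast
    then have "2 * real k * pi / real N = of_int (2 * int t) * pi" using assms by simp
    then show "\<exists>n::int. 2 * real k * pi / real N = of_int (2 * n) * pi" by blast
  qed
  finally show ?thesis .
qed

lemma qcurly_eq_0_iff: assumes "q \<noteq> 0" shows "qcurly k q = 0 \<longleftrightarrow> q ^ (2*k) = 1"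
proof -
  have "qcurly k q = 0 \<longleftrightarrow> q ^ k * q ^ k = 1" using assms
    by (auto simp: qcurly_def power_inverse field_simps)
  then show ?thesis by (simp add: power_add[symmetric] mult_2)
qed

lemma qcurly_xi_eq_0_iff: assumes "0 < N" shows "qcurly k (xi N) = 0 \<longleftrightarrow> N dvd k"
  using qcurly_eq_0_iff[OF xi_nonzero] xi_power_double_eq_1_iff[OF assms] by simp

lemma qcurly_xi_add_N: assumes "0 < N" shows "qcurly (N + k) (xi N) = - qcurly k (xi N)"
proof -
  have "inverse (xi N) ^ N = -1" using xi_power_N[OF assms] by (simp add: power_inverse)
  then show ?thesis using xi_power_N[OF assms] by (simp add: qcurly_def power_add)
qed

lemma qcurly_xi_N_minus: assumes "0 < N" "k \<le> N" shows "qcurly (N - k) (xi N) = qcurly k (xi N)"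
proof -
  have prod: "xi N ^ (N - k) * xi N ^ k = -1"
    using xi_power_N[OF assms(1)] assms(2) by (simp add: power_add[symmetric])
  then have prod_inv: "inverse (xi N) ^ (N - k) * inverse (xi N) ^ k = -1"
    by (metis inverse_minus_eq inverse_1 inverse_mult_distrib power_inverse)
  have "xi N ^ k \<noteq> 0" "inverse (xi N) ^ k \<noteq> 0" by (simp_all add: xi_nonzero)
  then have "xi N ^ (N - k) = - (inverse (xi N) ^ k)" "inverse (xi N) ^ (N - k) = - (xi N ^ k)"
    using prod prod_inv xi_nonzero[of N]
    by (simp_all add: power_inverse field_simps eq_neg_iff_add_eq_0)
  then show ?thesis by (simp add: qcurly_def)
qed

lemma qint_xi_eq_0: assumes "0 < N" "N dvd k" shows "qint k (xi N) = 0"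
  using assms qcurly_xi_eq_0_iff[of N k] by (simp add: qint_def)

lemma qint_xi_nonzero: assumes "2 \<le> N" "\<not> N dvd k" shows "qint k (xi N) \<noteq> 0"
  using assms qcurly_xi_eq_0_iff[of N k] qcurly_xi_eq_0_iff[of N 1] by (simp add: qint_def)

lemma qint_xi_add_N: assumes "0 < N" shows "qint (N + k) (xi N) = - qint k (xi N)"
  using assms qcurly_xi_add_N[of N k] by (simp add: qint_def)

lemma qint_xi_N_minus: assumes "0 < N" "k \<le> N" shows "qint (N - k) (xi N) = qint k (xi N)"
  using assms qcurly_xi_N_minus[of N k] by (simp add: qint_def)

lemma qint_fact_xi_nonzero: assumes "2 \<le> N" "c < N" shows "qint_fact c (xi N) \<noteq> 0"
proof -
  have "qint k (xi N) \<noteq> 0" if "k \<in> {1..c}" for k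
    using that assms by (intro qint_xi_nonzero) (auto dest: dvd_imp_le)
  then show ?thesis by (simp add: qint_fact_def)
qed

lemma prod_qint_xi_consecutive: assumes "0 < N" shows "(\<Prod>t<N. qint (x - t) (xi N)) = 0"
proof -
  have "x mod N < N" using assms by simp
  moreover have "qint (x - x mod N) (xi N) = 0"
    using assms by (intro qint_xi_eq_0) (simp_all add: minus_mod_eq_mult_div)
  ultimately show ?thesis by (intro prod_zero) auto
qed

section \<open>Powers of block matrices\<close>

lemma sum_delta_mult:
  "(\<Sum>l<(d::nat). (if l = p then x else 0) * (v l::complex)) = (if p < d then x * v p else 0)"
proof -
  have "(\<Sum>l<d. (if l = p then x else 0) * v l) = (\<Sum>l<d. if l = p then x * v p else 0)"
    by (rule sum.cong) auto
  then show ?thesis by (simp add: sum.delta)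
qed

lemma mpow_add:
  assumes "i < d"
  shows "mpow d M (a + b) i j = (\<Sum>l<d. mpow d M a i l * mpow d M b l j)"
  using assms
proof (induction a arbitrary: i)
  case 0
  have "(\<Sum>l<d. mpow d M 0 i l * mpow d M b l j) = (\<Sum>l<d. (if l = i then 1 else 0) * mpow d M b l j)"
    by (rule sum.cong) auto
  then show ?case using 0 by (simp add: sum_delta_mult)
next
  case (Suc a)
  have "mpow d M (Suc a + b) i j = (\<Sum>k<d. M i k * (\<Sum>l<d. mpow d M a k l * mpow d M b l j))"
    using Suc.IH by simp
  also have "\<dots> = (\<Sum>k<d. \<Sum>l<d. M i k * mpow d M a k l * mpow d M b l j)"
    by (simp only: sum_distrib_left mult.assoc)
  also have "\<dots> = (\<Sum>l<d. \<Sum>k<d. M i k * mpow d M a k l * mpow d M b l j)"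
    by (rule sum.swap)
  also have "\<dots> = (\<Sum>l<d. (\<Sum>k<d. M i k * mpow d M a k l) * mpow d M b l j)"
    by (simp only: sum_distrib_right)
  finally show ?case by simp
qed

text \<open>
  The shape of \<open>E\<close> on \<open>W\<^sub>m\<close> (with \<open>B = 0\<close>) and on \<open>Y\<^sub>m\<^sup>\<plusminus>\<close>: on the basis
  \<open>\<alpha>\<^sub>0, \<dots>, \<alpha>\<^sub>A\<^sub>-\<^sub>1, \<beta>\<^sub>0, \<dots>, \<beta>\<^sub>B\<^sub>-\<^sub>1\<close> (with \<open>\<beta>\<^sub>k\<close> at index \<open>A + k\<close>) it maps
  \<open>\<alpha>\<^sub>l \<mapsto> a\<^sub>l \<alpha>\<^sub>l\<^sub>-\<^sub>1 + c\<^sub>l \<beta>\<^sub>l\<^sub>-\<^sub>s\<close> and \<open>\<beta>\<^sub>k \<mapsto> e\<^sub>k \<beta>\<^sub>k\<^sub>-\<^sub>1\<close>.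
\<close>
definition eblock :: "nat \<Rightarrow> nat \<Rightarrow> nat \<Rightarrow> (nat \<Rightarrow> complex) \<Rightarrow> (nat \<Rightarrow> complex) \<Rightarrow> (nat \<Rightarrow> complex)
    \<Rightarrow> nat \<Rightarrow> nat \<Rightarrow> complex" where
  "eblock A B s a e c i l =
    (if i < A then (if l = Suc i \<and> l < A then a l else 0)
     else if i < A + B then (if l = Suc i \<and> l < A + B then e (l - A) else 0)
       + (if l < A \<and> s \<le> l \<and> i = A + (l - s) then c l else 0)
     else 0)"

text \<open>The coefficient of \<open>\<beta>\<close> in \<open>E\<^sup>n \<alpha>\<^sub>j\<close> collected along the path that descends \<open>b\<close> steps
  in the \<open>\<alpha>\<close>-chain, crosses over at \<open>\<alpha>\<^sub>j\<^sub>-\<^sub>b\<close> and descends the rest of the way in the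
  \<open>\<beta>\<close>-chain.\<close>
definition eblock_path :: "nat \<Rightarrow> nat \<Rightarrow> (nat \<Rightarrow> complex) \<Rightarrow> (nat \<Rightarrow> complex) \<Rightarrow> (nat \<Rightarrow> complex)
    \<Rightarrow> nat \<Rightarrow> nat \<Rightarrow> nat \<Rightarrow> complex" where
  "eblock_path B s a e c n j b =
    (if s \<le> j - b \<and> j - b < s + B
     then (\<Prod>t<b. a (j - t)) * c (j - b) * (\<Prod>t<n - Suc b. e (j - b - s - t)) else 0)"

definition eblock_pow :: "nat \<Rightarrow> nat \<Rightarrow> nat \<Rightarrow> (nat \<Rightarrow> complex) \<Rightarrow> (nat \<Rightarrow> complex) \<Rightarrow> (nat \<Rightarrow> complex)
    \<Rightarrow> nat \<Rightarrow> nat \<Rightarrow> nat \<Rightarrow> complex" where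
  "eblock_pow A B s a e c n i j =
    (if j < A then
       (if i < A then (if i + n = j then \<Prod>t<n. a (j - t) else 0)
        else if (i - A) + s + n = Suc j then (\<Sum>b<n. eblock_path B s a e c n j b)
        else 0)
     else (if i < A then 0 else if i + n = j then \<Prod>t<n. e (j - A - t) else 0))"

lemma eblock_row_alpha:
  assumes "i < A"
  shows "(\<Sum>l<A+B. eblock A B s a e c i l * v l) = (if Suc i < A then a (Suc i) * v (Suc i) else 0)"
proof -
  have "(\<Sum>l<A+B. eblock A B s a e c i l * v l)
      = (\<Sum>l<A+B. (if l = Suc i then (if Suc i < A then a (Suc i) else 0) else 0) * v l)"
    by (rule sum.cong) (use assms in \<open>auto simp: eblock_def\<close>)
  then show ?thesis by (simp add: sum_delta_mult)
qed

lemma eblock_row_beta: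
  assumes "A \<le> i" "i < A + B"
  shows "(\<Sum>l<A+B. eblock A B s a e c i l * v l)
    = (if Suc i < A + B then e (Suc i - A) * v (Suc i) else 0)
      + (if i - A + s < A then c (i - A + s) * v (i - A + s) else 0)"
proof -
  have "(\<Sum>l<A+B. eblock A B s a e c i l * v l)
      = (\<Sum>l<A+B. (if l = Suc i then (if Suc i < A + B then e (Suc i - A) else 0) else 0) * v l
          + (if l = i - A + s then (if i - A + s < A then c (i - A + s) else 0) else 0) * v l)"
    by (rule sum.cong) (use assms in \<open>auto simp: eblock_def distrib_right\<close>)
  then show ?thesis using assms by (simp add: sum.distrib sum_delta_mult)
qed

lemma eblock_path_Suc:
  assumes "b < n" "i - A + s + n = j" "A \<le> i"
  shows "e (Suc i - A) * eblock_path B s a e c n j b = eblock_path B s a e c (Suc n) j b"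
proof (cases "s \<le> j - b \<and> j - b < s + B")
  case True
  have "n - b = Suc (n - Suc b)" "j - b - s - (n - Suc b) = Suc i - A"
    using True assms by auto
  then have "(\<Prod>t<Suc n - Suc b. e (j - b - s - t)) = (\<Prod>t<n - Suc b. e (j - b - s - t)) * e (Suc i - A)"
    by simp
  then show ?thesis using True by (simp add: eblock_path_def ac_simps)
next
  case False
  then show ?thesis unfolding eblock_path_def if_not_P[OF False] by simp
qed

lemma eblock_pow_Suc_alpha:
  assumes "i < A"
  shows "eblock_pow A B s a e c (Suc n) i j =
    (if Suc i < A then a (Suc i) * eblock_pow A B s a e c n (Suc i) j else 0)"
proof (cases "j < A \<and> i + Suc n = j")
  case True
  then have "j - n = Suc i" by auto
  then show ?thesis using True assms by (simp add: eblock_pow_def mult.commute)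
qed (use assms in \<open>auto simp: eblock_pow_def\<close>)

lemma eblock_pow_Suc_crossing:
  assumes iA: "A \<le> i" and "i < A + B" and cond: "j < A" "i - A + s + n = j"
  shows "(if Suc i < A + B then e (Suc i - A) * eblock_pow A B s a e c n (Suc i) j else 0)
      + (if i - A + s < A then c (i - A + s) * eblock_pow A B s a e c n (i - A + s) j else 0)
    = eblock_pow A B s a e c (Suc n) i j"
proof -
  let ?P = "eblock_pow A B s a e c"
  have beta_step: "(if Suc i < A + B then e (Suc i - A) * ?P n (Suc i) j else 0)
      = (\<Sum>b<n. eblock_path B s a e c (Suc n) j b)"
  proof (cases "Suc i < A + B")
    case True
    have "Suc i - A + s + n = Suc j" "\<not> Suc i < A" using cond iA by auto
    then have "e (Suc i - A) * ?P n (Suc i) j = e (Suc i - A) * (\<Sum>b<n. eblock_path B s a e c n j b)"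
      using cond by (simp add: eblock_pow_def)
    then show ?thesis
      using True cond iA by (simp add: sum_distrib_left eblock_path_Suc)
  next
    case False
    then show ?thesis using cond iA by (auto intro!: sum.neutral simp: eblock_path_def)
  qed
  have cross: "(if i - A + s < A then c (i - A + s) * ?P n (i - A + s) j else 0)
      = eblock_path B s a e c (Suc n) j n"
  proof -
    have "j - n = i - A + s" "s \<le> j - n \<and> j - n < s + B" using cond assms(2) iA by auto
    then show ?thesis using cond by (simp add: eblock_path_def eblock_pow_def mult.commute)
  qed
  have "?P (Suc n) i j = (\<Sum>b<Suc n. eblock_path B s a e c (Suc n) j b)"
    using cond iA by (simp add: eblock_pow_def)
  then show ?thesis unfolding beta_step cross by simp
qed

lemma eblock_pow_Suc_beta:
  assumes iA: "A \<le> i" and "i < A + B" "j < A + B"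
  shows "(if Suc i < A + B then e (Suc i - A) * eblock_pow A B s a e c n (Suc i) j else 0)
      + (if i - A + s < A then c (i - A + s) * eblock_pow A B s a e c n (i - A + s) j else 0)
    = eblock_pow A B s a e c (Suc n) i j"
proof -
  let ?P = "eblock_pow A B s a e c"
  consider "j < A \<and> i - A + s + n = j" | "A \<le> j \<and> i + Suc n = j"
    | "\<not> (j < A \<and> i - A + s + n = j)" "\<not> (A \<le> j \<and> i + Suc n = j)" by blast
  then show ?thesis
  proof cases
    case 1
    then show ?thesis using eblock_pow_Suc_crossing[OF iA assms(2)] by blast
  next
    case 2
    have "Suc i < A + B" using 2 assms(3) by simp
    moreover have "?P n (i - A + s) j = 0" if "i - A + s < A" using 2 that by (simp add: eblock_pow_def)
    moreover have "?P n (Suc i) j = (\<Prod>t<n. e (j - A - t))" using 2 iA by (simp add: eblock_pow_def)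
    moreover have "?P (Suc n) i j = e (Suc i - A) * (\<Prod>t<n. e (j - A - t))"
    proof -
      have pos: "\<not> j < A" "\<not> i < A" "i + Suc n = j" using 2 iA by auto
      have "?P (Suc n) i j = (\<Prod>t<Suc n. e (j - A - t))"
        unfolding eblock_pow_def by (simp only: pos if_False if_True refl)
      also have "\<dots> = e (j - A - n) * (\<Prod>t<n. e (j - A - t))"
        by (simp only: prod.lessThan_Suc mult.commute)
      also have "j - A - n = Suc i - A" using pos by auto
      finally show ?thesis .
    qed
    ultimately show ?thesis by simp
  next
    case 3
    have "?P n (Suc i) j = 0" "?P (Suc n) i j = 0" using 3 iA by (auto simp: eblock_pow_def)
    moreover have "?P n (i - A + s) j = 0" if "i - A + s < A" using 3 that by (auto simp: eblock_pow_def)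
    ultimately show ?thesis by simp
  qed
qed

lemma mpow_eblock:
  assumes "i < A + B" and "j < A + B"
  shows "mpow (A+B) (eblock A B s a e c) n i j = eblock_pow A B s a e c n i j"
  using assms(1)
proof (induction n arbitrary: i)
  case 0
  then show ?case by (auto simp: eblock_pow_def)
next
  case (Suc n)
  show ?case
  proof (cases "i < A")
    case True
    then show ?thesis using Suc.IH[of "Suc i"] by (auto simp: eblock_row_alpha eblock_pow_Suc_alpha)
  next
    case False
    then show ?thesis using Suc.IH[of "Suc i"] Suc.IH[of "i - A + s"] Suc.prems assms(2)
      by (auto simp: eblock_row_beta eblock_pow_Suc_beta[symmetric])
  qed
qed

lemma eblock_pow_beyond:
  assumes "i < A + B" "j < A + B" "A + B \<le> n"
  shows "eblock_pow A B s a e c n i j = 0"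
proof -
  have ne: "i + n \<noteq> j" using assms by auto
  consider "j < A" "i < A" | "j < A" "\<not> i < A" | "\<not> j < A" by blast
  then show ?thesis
  proof cases
    case 2
    then have "i - A + s + n \<noteq> Suc j" using assms by auto
    with 2 show ?thesis unfolding eblock_pow_def by (simp only: if_True if_False)
  qed (simp_all only: eblock_pow_def ne if_True if_False if_cancel)
qed

lemma eblock_pow_mixed:
  assumes "j < A" "A \<le> i"
  shows "eblock_pow A B s a e c n i j =
    (if i - A + s + n = Suc j then \<Sum>b<n. eblock_path B s a e c n j b else 0)"
proof -
  have "\<not> i < A" using assms by simp
  then show ?thesis unfolding eblock_pow_def by (simp only: assms(1) if_True if_False)
qed

text \<open>The shape of \<open>F\<close>: \<open>\<alpha>\<^sub>l \<mapsto> a\<^sub>l \<alpha>\<^sub>l\<^sub>+\<^sub>1\<close> (plus \<open>c\<^sub>0 \<beta>\<^sub>0\<close> when \<open>l = p\<close>) and \<open>\<beta>\<^sub>k \<mapsto> e\<^sub>k \<beta>\<^sub>k\<^sub>+\<^sub>1\<close>.\<close>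
definition fblock :: "nat \<Rightarrow> nat \<Rightarrow> nat \<Rightarrow> (nat \<Rightarrow> complex) \<Rightarrow> (nat \<Rightarrow> complex) \<Rightarrow> complex
    \<Rightarrow> nat \<Rightarrow> nat \<Rightarrow> complex" where
  "fblock A B p a e c0 i l =
    (if l < A then (if i < A \<and> i = Suc l then a l else 0) + (if l = p \<and> i = A \<and> 0 < B then c0 else 0)
     else if l < A + B then (if i < A + B \<and> i = Suc l then e (l - A) else 0)
     else 0)"

definition fblock_pow :: "nat \<Rightarrow> nat \<Rightarrow> nat \<Rightarrow> (nat \<Rightarrow> complex) \<Rightarrow> (nat \<Rightarrow> complex) \<Rightarrow> complex
    \<Rightarrow> nat \<Rightarrow> nat \<Rightarrow> nat \<Rightarrow> complex" where
  "fblock_pow A B p a e c0 n i j =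
    (if j < A then
       (if i < A then (if i = j + n then \<Prod>t<n. a (j + t) else 0)
        else if j \<le> p \<and> p < A \<and> 0 < B \<and> n = (p - j) + Suc (i - A)
        then (\<Prod>t<p - j. a (j + t)) * c0 * (\<Prod>t<i - A. e t)
        else 0)
     else (if i < A then 0 else if i = j + n then \<Prod>t<n. e (j - A + t) else 0))"

lemma fblock_row_alpha:
  assumes "i < A"
  shows "(\<Sum>l<A+B. fblock A B p a e c0 i l * v l) = (if 0 < i then a (i - 1) * v (i - 1) else 0)"
proof -
  have "(\<Sum>l<A+B. fblock A B p a e c0 i l * v l)
      = (\<Sum>l<A+B. (if l = i - 1 then (if 0 < i then a (i - 1) else 0) else 0) * v l)"
    by (rule sum.cong) (use assms in \<open>auto simp: fblock_def\<close>)
  then show ?thesis using assms by (simp add: sum_delta_mult)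
qed

lemma fblock_row_beta0:
  "(\<Sum>l<A+B. fblock A B p a e c0 A l * v l) = (if p < A \<and> 0 < B then c0 * v p else 0)"
proof -
  have "(\<Sum>l<A+B. fblock A B p a e c0 A l * v l)
      = (\<Sum>l<A+B. (if l = p then (if p < A \<and> 0 < B then c0 else 0) else 0) * v l)"
    by (rule sum.cong) (auto simp: fblock_def)
  then show ?thesis by (auto simp: sum_delta_mult)
qed

lemma fblock_row_beta:
  assumes "A < i" "i < A + B"
  shows "(\<Sum>l<A+B. fblock A B p a e c0 i l * v l) = e (i - 1 - A) * v (i - 1)"
proof -
  have "(\<Sum>l<A+B. fblock A B p a e c0 i l * v l) = (\<Sum>l<A+B. (if l = i - 1 then e (i - 1 - A) else 0) * v l)"
    by (rule sum.cong) (use assms in \<open>auto simp: fblock_def\<close>)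
  then show ?thesis using assms by (simp add: sum_delta_mult)
qed

lemma fblock_pow_Suc_alpha:
  assumes "i < A"
  shows "fblock_pow A B p a e c0 (Suc n) i j = (if 0 < i then a (i - 1) * fblock_pow A B p a e c0 n (i - 1) j else 0)"
proof (cases "j < A \<and> i = j + Suc n")
  case True
  then have "j + n = i - 1" by simp
  then show ?thesis using True assms by (simp add: fblock_pow_def mult.commute)
qed (use assms in \<open>auto simp: fblock_pow_def\<close>)

lemma fblock_pow_Suc_beta0:
  "fblock_pow A B p a e c0 (Suc n) A j = (if p < A \<and> 0 < B then c0 * fblock_pow A B p a e c0 n p j else 0)"
proof (cases "p < A \<and> 0 < B \<and> j < A \<and> p = j + n")
  case True
  then show ?thesis by (auto simp: fblock_pow_def mult.commute)
qed (auto simp: fblock_pow_def)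

lemma fblock_pow_Suc_beta:
  assumes "A < i"
  shows "fblock_pow A B p a e c0 (Suc n) i j = e (i - 1 - A) * fblock_pow A B p a e c0 n (i - 1) j"
proof (cases "j < A")
  case True
  have "i - A = Suc (i - 1 - A)" using assms by simp
  then show ?thesis using True assms unfolding fblock_pow_def by (auto simp: ac_simps)
next
  case False
  show ?thesis
  proof (cases "i = j + Suc n")
    case True
    then have "j - A + n = i - 1 - A" using False by simp
    then show ?thesis using True False assms by (simp add: fblock_pow_def mult.commute)
  qed (use False assms in \<open>auto simp: fblock_pow_def\<close>)
qed

lemma mpow_fblock:
  assumes "i < A + B"
  shows "mpow (A+B) (fblock A B p a e c0) n i j = fblock_pow A B p a e c0 n i j"
  using assms
proof (induction n arbitrary: i)
  case 0
  then show ?case by (auto simp: fblock_pow_def)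
next
  case (Suc n)
  let ?M = "fblock A B p a e c0"
  have rec: "mpow (A+B) ?M (Suc n) i j = (\<Sum>l<A+B. ?M i l * mpow (A+B) ?M n l j)"
    by simp
  consider "i < A" | "i = A" | "A < i" by linarith
  then show ?case
  proof cases
    case 1
    then show ?thesis unfolding rec fblock_row_alpha[OF 1] fblock_pow_Suc_alpha[OF 1]
      using Suc.IH[of "i - 1"] by auto
  next
    case 2
    then show ?thesis unfolding rec
      using fblock_row_beta0[of A B p a e c0 "\<lambda>k. mpow (A+B) ?M n k j"] Suc.IH[of p]
      by (auto simp: fblock_pow_Suc_beta0)
  next
    case 3
    then show ?thesis unfolding rec fblock_row_beta[OF 3 Suc.prems] fblock_pow_Suc_beta[OF 3]
      using Suc.IH[of "i - 1"] Suc.prems by auto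
  qed
qed

lemma fblock_pow_mixed:
  assumes "j < A" "A \<le> i"
  shows "fblock_pow A B p a e c0 n i j =
    (if j \<le> p \<and> p < A \<and> 0 < B \<and> n = (p - j) + Suc (i - A)
     then (\<Prod>t<p - j. a (j + t)) * c0 * (\<Prod>t<i - A. e t) else 0)"
proof -
  have "\<not> i < A" using assms by simp
  then show ?thesis unfolding fblock_pow_def by (simp only: assms(1) if_True if_False)
qed

section \<open>The modules as glued chains\<close>

text \<open>Each module is a chain \<open>\<alpha>\<close> of length \<open>alpha_dim\<close> followed by a chain \<open>\<beta>\<close> of length
  \<open>beta_dim\<close>; \<open>E\<close> and \<open>F\<close> act as on \<open>W\<^sub>A \<oplus> W\<^sub>B\<close> except for a single coupling from \<open>\<alpha>\<close> to
  \<open>\<beta>\<close>. The \<open>q\<close>-binomials \<open>qb\<close> and \<open>q\<close>-integers \<open>qi\<close> are parameters, to be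
  specialized either to their generic values or to their cancelled forms at \<open>\<xi>\<close>.\<close>

fun alpha_dim :: "nat \<Rightarrow> qmod \<Rightarrow> nat" where
  "alpha_dim N (W m) = m"
| "alpha_dim N (Yp m) = 2*N - m"
| "alpha_dim N (Ym m) = 2*N + m"

fun beta_dim :: "nat \<Rightarrow> qmod \<Rightarrow> nat" where
  "beta_dim N (W m) = 0"
| "beta_dim N (Yp m) = m"
| "beta_dim N (Ym m) = 2*N - m"

fun E_offset :: "nat \<Rightarrow> qmod \<Rightarrow> nat" where
  "E_offset N (W m) = 0"
| "E_offset N (Yp m) = N + 1 - m"
| "E_offset N (Ym m) = m + 1"

fun E_coupling :: "nat \<Rightarrow> qmod \<Rightarrow> (nat \<Rightarrow> nat \<Rightarrow> complex) \<Rightarrow> nat \<Rightarrow> complex" where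
  "E_coupling N (W m) qb l = 0"
| "E_coupling N (Yp m) qb l = (if N - m + 1 \<le> l \<and> l \<le> N then qb (2*N - m - l - 1) (N - l) else 0)"
| "E_coupling N (Ym m) qb l = (if m + 1 \<le> l \<and> l \<le> 2*N then qb (2*N + m - 1 - l) (2*N - l) else 0)"

fun F_pivot :: "nat \<Rightarrow> qmod \<Rightarrow> nat" where
  "F_pivot N (W m) = 0"
| "F_pivot N (Yp m) = N - m - 1"
| "F_pivot N (Ym m) = m - 1"

fun F_coupling :: "nat \<Rightarrow> qmod \<Rightarrow> (nat \<Rightarrow> nat \<Rightarrow> complex) \<Rightarrow> complex" where
  "F_coupling N (W m) qb = 0"
| "F_coupling N (Yp m) qb = qb (N - 1) (m - 1)"
| "F_coupling N (Ym m) qb = qb (2*N - 1) (2*N - m - 1)"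

definition E_shape :: "nat \<Rightarrow> qmod \<Rightarrow> (nat \<Rightarrow> nat \<Rightarrow> complex) \<Rightarrow> (nat \<Rightarrow> complex) \<Rightarrow> nat \<Rightarrow> nat \<Rightarrow> complex"
  where "E_shape N V qb qi = eblock (alpha_dim N V) (beta_dim N V) (E_offset N V) qi qi (E_coupling N V qb)"

definition F_shape :: "nat \<Rightarrow> qmod \<Rightarrow> (nat \<Rightarrow> nat \<Rightarrow> complex) \<Rightarrow> (nat \<Rightarrow> complex) \<Rightarrow> nat \<Rightarrow> nat \<Rightarrow> complex"
  where "F_shape N V qb qi = fblock (alpha_dim N V) (beta_dim N V) (F_pivot N V)
    (\<lambda>l. qi (alpha_dim N V - 1 - l)) (\<lambda>k. qi (beta_dim N V - 1 - k)) (F_coupling N V qb)"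

lemma qdim_eq_alpha_beta: assumes "admissible N V" shows "qdim N V = alpha_dim N V + beta_dim N V"
  using assms by (cases V) auto

lemma Ematq_eq_E_shape:
  assumes "admissible N V"
  shows "Ematq N V q = E_shape N V (\<lambda>a b. qbinom a b q) (\<lambda>k. qint k q)"
proof (intro ext)
  fix i j
  show "Ematq N V q i j = E_shape N V (\<lambda>a b. qbinom a b q) (\<lambda>k. qint k q) i j"
  proof (cases V)
    case (W m)
    then show ?thesis by (auto simp: E_shape_def eblock_def)
  next
    case (Yp m)
    define A where "A = 2*N - m"
    have A: "2*N - m = A" "N + 1 - m \<le> N" "N < A" using assms Yp by (auto simp: A_def)
    have coupling: "(N - m + 1 \<le> j \<and> j \<le> N \<and> i = A + (m + j - N - 1)) \<longleftrightarrow>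
        (\<not> i < A \<and> i < A + m \<and> j < A \<and> N + 1 - m \<le> j \<and> i = A + (j - (N + 1 - m))
          \<and> N - m + 1 \<le> j \<and> j \<le> N)"
      using assms Yp A by auto
    show ?thesis
      unfolding Yp Ematq.simps E_shape_def eblock_def Let_def alpha_dim.simps beta_dim.simps
        E_offset.simps E_coupling.simps A
      using coupling by (cases "j < A"; cases "i < A"; cases "i < A + m") auto
  next
    case (Ym m)
    define A where "A = 2*N + m"
    have A: "2*N + m = A" "2*N < A" using assms Ym by (auto simp: A_def)
    have coupling: "(m + 1 \<le> j \<and> j \<le> 2*N \<and> i = A + (j - m - 1)) \<longleftrightarrow>
        (\<not> i < A \<and> i < A + (2*N - m) \<and> j < A \<and> m + 1 \<le> j \<and> i = A + (j - (m + 1))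
          \<and> m + 1 \<le> j \<and> j \<le> 2*N)"
      using assms Ym A by auto
    show ?thesis
      unfolding Ym Ematq.simps E_shape_def eblock_def Let_def alpha_dim.simps beta_dim.simps
        E_offset.simps E_coupling.simps A
      using coupling by (cases "j < A"; cases "i < A"; cases "i < A + (2*N - m)") auto
  qed
qed

lemma Fmatq_eq_F_shape:
  assumes "admissible N V"
  shows "Fmatq N V q = F_shape N V (\<lambda>a b. qbinom a b q) (\<lambda>k. qint k q)"
  using assms by (cases V) (auto intro!: ext simp: F_shape_def fblock_def Let_def diff_diff_add ac_simps)

lemma mpow_E_shape_beyond:
  assumes "admissible N V" "i < qdim N V" "j < qdim N V" "qdim N V \<le> n"
  shows "mpow (qdim N V) (E_shape N V qb qi) n i j = 0"
  using assms mpow_eblock eblock_pow_beyond unfolding qdim_eq_alpha_beta[OF assms(1)] E_shape_def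
  by metis

section \<open>Nilpotency at the root of unity\<close>

text \<open>The \<open>q\<close>-binomial with the factor \<open>[b]!\<close> cancelled; unlike \<open>qbinom\<close> it is regular at
  \<open>\<xi>\<close> whenever \<open>a - b < N\<close>.\<close>
definition qbinom_reduced :: "nat \<Rightarrow> nat \<Rightarrow> complex \<Rightarrow> complex" where
  "qbinom_reduced a b q = (\<Prod>k\<in>{b<..a}. qint k q) / qint_fact (a - b) q"

abbreviation qint_xi :: "nat \<Rightarrow> nat \<Rightarrow> complex" where
  "qint_xi N \<equiv> \<lambda>k. qint k (xi N)"

abbreviation qbinom_xi :: "nat \<Rightarrow> nat \<Rightarrow> nat \<Rightarrow> complex" where
  "qbinom_xi N \<equiv> \<lambda>a b. qbinom_reduced a b (xi N)"

lemma prod_lessThan_add: "(\<Prod>t<a + b. f t) = (\<Prod>t<a. f t) * (\<Prod>t<b. f (a + t))"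
  for f :: "nat \<Rightarrow> 'a::comm_monoid_mult"
  by (induction b) (simp_all add: ac_simps)

lemma qbinom_xi_N_plus:
  assumes "2 \<le> N" "1 \<le> m" "m \<le> N - 1"
  shows "qbinom_xi N (N + m - 1) N = (-1) ^ (m - 1)"
proof -
  have "(\<Prod>y\<in>{1..m-1}. - qint_xi N y) = (\<Prod>x\<in>{N<..N+m-1}. qint_xi N x)"
    by (rule prod.reindex_bij_witness[where j = "\<lambda>y. N + y" and i = "\<lambda>x. x - N"])
       (use assms in \<open>auto simp: qint_xi_add_N\<close>)
  moreover have "(\<Prod>y\<in>{1..m-1}. - qint_xi N y) = (-1) ^ (m - 1) * qint_fact (m - 1) (xi N)"
    by (simp add: prod_uminus qint_fact_def)
  moreover have "N + m - 1 - N = m - 1" by simp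
  ultimately show ?thesis using qint_fact_xi_nonzero[OF assms(1), of "m - 1"] assms
    by (simp add: qbinom_reduced_def)
qed

lemma qbinom_xi_N_minus:
  assumes "2 \<le> N" "1 \<le> m" "m \<le> N - 1"
  shows "qbinom_xi N (N - 1) (N - m) = 1"
proof -
  have "(\<Prod>y\<in>{1..m-1}. qint_xi N y) = (\<Prod>x\<in>{N-m<..N-1}. qint_xi N x)"
    by (rule prod.reindex_bij_witness[where j = "\<lambda>y. N - y" and i = "\<lambda>x. N - x"])
       (use assms in \<open>auto simp: qint_xi_N_minus\<close>)
  moreover have "N - 1 - (N - m) = m - 1" using assms by simp
  ultimately show ?thesis using qint_fact_xi_nonzero[OF assms(1), of "m - 1"] assms
    by (simp add: qbinom_reduced_def qint_fact_def)
qed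

text \<open>In \<open>Y\<^sub>m\<^sup>-\<close> at \<open>q = \<xi>\<close>, a path from \<open>\<alpha>\<^sub>j\<close> to \<open>\<beta>\<close> of length \<open>N\<close> picks up a factor
  \<open>[N] = 0\<close> or \<open>[2N] = 0\<close> unless it crosses over at \<open>\<alpha>\<^sub>N\<close> or \<open>\<alpha>\<^sub>N\<^sub>+\<^sub>m\<close>.\<close>
lemma ym_path_xi_vanishes:
  assumes N: "2 \<le> N" and m: "1 \<le> m" "m \<le> N - 1" and j: "N + m \<le> j" "j < 2*N + m" and "b < N"
    and cross: "(j - b \<noteq> N \<and> j - b \<noteq> N + m) \<or> 2*N \<le> j"
  shows "eblock_path (2*N - m) (m + 1) (qint_xi N) (qint_xi N) (E_coupling N (Ym m) (qbinom_xi N)) N j b = 0"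
proof -
  define c where "c = E_coupling N (Ym m) (qbinom_xi N)"
  have QN: "qint_xi N N = 0" and Q2N: "qint_xi N (2*N) = 0" using N by (simp_all add: qint_xi_eq_0)
  define i where "i = j - b"
  have ji: "j = i + b" using \<open>b < N\<close> j by (simp add: i_def)
  have "(\<Prod>t<b. qint_xi N (j - t)) = 0 \<or> c i = 0 \<or> (\<Prod>t<N - Suc b. qint_xi N (j - b - (m+1) - t)) = 0"
    if range: "m + 1 \<le> i" "i < m + 1 + (2*N - m)"
  proof -
    consider "i < N" | "2*N \<le> j" "i < 2*N" | "N < i" "i < N + m" | "N + m < i" "i \<le> 2*N"
      using cross range m unfolding i_def by arith
    then show ?thesis
    proof cases
      case 1
      have "j - N < b" "qint_xi N (j - (j - N)) = 0" using 1 ji j QN by auto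
      then have "(\<Prod>t<b. qint_xi N (j - t)) = 0" by (intro prod_zero) auto
      then show ?thesis by simp
    next
      case 2
      have "j - 2*N < b" "qint_xi N (j - (j - 2*N)) = 0" using 2 ji Q2N by auto
      then have "(\<Prod>t<b. qint_xi N (j - t)) = 0" by (intro prod_zero) auto
      then show ?thesis by simp
    next
      case 3
      have "N \<in> {2*N - i<..2*N+m-1-i}" unfolding greaterThanAtMost_iff using 3 N by arith
      then have "(\<Prod>x\<in>{2*N - i<..2*N+m-1-i}. qint_xi N x) = 0"
        using QN by (intro prod_zero) auto
      then have "c i = 0" using 3 by (simp add: c_def qbinom_reduced_def)
      then show ?thesis by simp
    next
      case 4
      have "i - (m+1) - N < N - Suc b" "j - b - (m+1) - (i - (m+1) - N) = N"
        using 4 ji j unfolding i_def by arith+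
      then have "(\<Prod>t<N - Suc b. qint_xi N (j - b - (m+1) - t)) = 0"
        using QN by (intro prod_zero bexI[of _ "i - (m+1) - N"]) auto
      then show ?thesis by simp
    qed
  qed
  then show ?thesis unfolding eblock_path_def c_def[symmetric] i_def by auto
qed

lemma prod_qint_xi_above_N:
  assumes "0 < N"
  shows "(\<Prod>t<m. qint_xi N (N + (m - t))) = (-1) ^ m * (\<Prod>t<m. qint_xi N (Suc t))"
proof -
  have "(\<Prod>t<m. qint_xi N (N + (m - t))) = (\<Prod>t<m. - qint_xi N (m - t))"
    by (intro prod.cong refl qint_xi_add_N[OF assms])
  also have "\<dots> = (-1) ^ m * (\<Prod>t<m. qint_xi N (m - t))"
    by (simp add: prod_uminus)
  also have "(\<Prod>t<m. qint_xi N (m - t)) = (\<Prod>t<m. qint_xi N (Suc t))"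
    by (rule prod.reindex_bij_witness[where j = "\<lambda>t. m - 1 - t" and i = "\<lambda>t. m - 1 - t"])
       (auto simp: Suc_diff_Suc)
  finally show ?thesis .
qed

lemma prod_qint_xi_below_N:
  assumes "0 < N" "m \<le> N"
  shows "(\<Prod>t<m. qint_xi N (N - 1 - t)) = (\<Prod>t<m. qint_xi N (Suc t))"
proof (rule prod.cong)
  fix t assume "t \<in> {..<m}"
  then have "N - 1 - t = N - Suc t" "Suc t \<le> N" using assms by auto
  then show "qint_xi N (N - 1 - t) = qint_xi N (Suc t)" using qint_xi_N_minus[OF assms(1), of "Suc t"] by simp
qed simp

text \<open>The two surviving paths cancel: at \<open>q = \<xi>\<close> their coupling coefficients are \<open>(-1)\<^sup>m\<^sup>-\<^sup>1\<close>
  and \<open>1\<close>, while their \<open>\<alpha>\<close>-parts differ by the sign \<open>(-1)\<^sup>m\<close> coming from \<open>[N + k] = -[k]\<close>.\<close>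
lemma ym_paths_xi_cancel:
  assumes N: "2 \<le> N" and m: "1 \<le> m" "m \<le> N - 1" and j: "j = N + m + u" and u: "u + m < N"
  defines "P \<equiv> eblock_path (2*N - m) (m + 1) (qint_xi N) (qint_xi N) (E_coupling N (Ym m) (qbinom_xi N)) N j"
  shows "P (u + m) + P u = 0"
proof -
  define X where "X = (\<Prod>t<u. qint_xi N (j - t))"
  define Y where "Y = (\<Prod>t<N - Suc (u + m). qint_xi N (N - (m + 1) - t))"
  define Z where "Z = (\<Prod>t<m. qint_xi N (Suc t))"
  have N0: "0 < N" using N by simp
  have alpha1: "(\<Prod>t<u + m. qint_xi N (j - t)) = X * ((-1) ^ m * Z)"
  proof -
    have "(\<Prod>t<m. qint_xi N (j - (u + t))) = (\<Prod>t<m. qint_xi N (N + (m - t)))"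
      using j by (intro prod.cong) auto
    then show ?thesis unfolding X_def Z_def prod_lessThan_add prod_qint_xi_above_N[OF N0] by simp
  qed
  have beta2: "(\<Prod>t<N - Suc u. qint_xi N (j - u - (m + 1) - t)) = Z * Y"
  proof -
    have split: "N - Suc u = m + (N - Suc (u + m))" using u by simp
    have "(\<Prod>t<N - Suc (u + m). qint_xi N (N - 1 - (m + t))) = Y" unfolding Y_def
      by (rule prod.cong) auto
    then show ?thesis unfolding split prod_lessThan_add Z_def
      using j prod_qint_xi_below_N[OF N0, of m] m by simp
  qed
  have "P (u + m) = X * ((-1) ^ m * Z) * (-1) ^ (m - 1) * Y"
  proof -
    have "j - (u + m) = N" "2*N + m - 1 - N = N + m - 1" "2*N - N = N" using j by auto
    then show ?thesis using alpha1 m qbinom_xi_N_plus[OF N m] by (simp add: P_def eblock_path_def Y_def)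
  qed
  moreover have "P u = X * 1 * (Z * Y)"
  proof -
    have "j - u = N + m" "2*N + m - 1 - (N + m) = N - 1" "2*N - (N + m) = N - m" using j m by auto
    then show ?thesis using beta2 m N qbinom_xi_N_minus[OF N m] by (simp add: P_def eblock_path_def X_def)
  qed
  moreover have "(-1::complex) ^ m = - ((-1) ^ (m - 1))"
    using m by (metis Suc_diff_1 less_le_trans mult_minus1 power_Suc zero_less_one)
  ultimately show ?thesis by (simp add: algebra_simps)
qed

lemma ym_mixed_xi_vanishes:
  assumes N: "2 \<le> N" and m: "1 \<le> m" "m \<le> N - 1" and j: "N + m \<le> j" "j < 2*N + m"
  shows "(\<Sum>b<N. eblock_path (2*N - m) (m + 1) (qint_xi N) (qint_xi N) (E_coupling N (Ym m) (qbinom_xi N)) N j b) = 0"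
    (is "(\<Sum>b<N. ?P b) = 0")
proof (cases "2*N \<le> j")
  case True
  then show ?thesis using ym_path_xi_vanishes[OF N m j] by (intro sum.neutral) auto
next
  case False
  define u where "u = j - N - m"
  have ju: "j = N + m + u" and uN: "u + m < N" using j False by (auto simp: u_def)
  have "(\<Sum>b<N. ?P b) = (\<Sum>b\<in>{u + m, u}. ?P b)"
  proof (rule sum.mono_neutral_right)
    show "\<forall>b\<in>{..<N} - {u + m, u}. ?P b = 0"
    proof
      fix b assume b: "b \<in> {..<N} - {u + m, u}"
      then have "j - b \<noteq> N \<and> j - b \<noteq> N + m" using ju by auto
      then show "?P b = 0" using ym_path_xi_vanishes[OF N m j] b by blast
    qed
  qed (use uN in auto)
  also have "\<dots> = ?P (u + m) + ?P u" using m by simp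
  also have "\<dots> = 0" by (rule ym_paths_xi_cancel[OF N m ju uN])
  finally show ?thesis .
qed

lemma eblock_pow_xi_unmixed:
  assumes "0 < N" "i < A + B" "\<not> (j < A \<and> A \<le> i)"
  shows "eblock_pow A B s (qint_xi N) (qint_xi N) c N i j = 0"
proof (cases "j < A")
  case True
  then have "i < A" using assms by auto
  then show ?thesis using True prod_qint_xi_consecutive[OF assms(1), of j] by (simp add: eblock_pow_def)
next
  case False
  then show ?thesis using prod_qint_xi_consecutive[OF assms(1), of "j - A"] by (simp add: eblock_pow_def)
qed

lemma fblock_pow_xi_unmixed:
  assumes "0 < N" "\<not> (j < A \<and> A \<le> i)"
  shows "fblock_pow A B p (\<lambda>l. qint_xi N (A - 1 - l)) (\<lambda>k. qint_xi N (B - 1 - k)) c0 N i j = 0"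
proof (cases "j < A")
  case True
  then have "i < A" using assms by auto
  moreover have "(\<Prod>t<N. qint_xi N (A - 1 - (j + t))) = 0"
    using prod_qint_xi_consecutive[OF assms(1), of "A - 1 - j"] by (simp add: diff_diff_add)
  ultimately show ?thesis using True by (simp add: fblock_pow_def)
next
  case False
  have "(\<Prod>t<N. qint_xi N (B - 1 - (j - A + t))) = 0"
    using prod_qint_xi_consecutive[OF assms(1), of "B - 1 - (j - A)"] by (simp add: diff_diff_add)
  then show ?thesis using False by (simp add: fblock_pow_def)
qed

lemma E_shape_xi_nilpotent:
  assumes N: "2 \<le> N" and V: "admissible N V" and ij: "i < qdim N V" "j < qdim N V"
  shows "mpow (qdim N V) (E_shape N V (qbinom_xi N) (qint_xi N)) N i j = 0"
proof -
  let ?A = "alpha_dim N V" and ?B = "beta_dim N V" and ?s = "E_offset N V"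
    and ?c = "E_coupling N V (qbinom_xi N)"
  have "eblock_pow ?A ?B ?s (qint_xi N) (qint_xi N) ?c N i j = 0"
  proof (cases "j < ?A \<and> ?A \<le> i")
    case False
    then show ?thesis using N ij qdim_eq_alpha_beta[OF V] by (intro eblock_pow_xi_unmixed) auto
  next
    case mixed: True
    show ?thesis
    proof (cases V)
      case (W m)
      then show ?thesis using mixed ij by simp
    next
      case (Yp m)
      then have "i - ?A + ?s + N \<noteq> Suc j" using mixed V by auto
      then show ?thesis using mixed by (simp add: eblock_pow_mixed)
    next
      case (Ym m)
      show ?thesis
      proof (cases "i - ?A + ?s + N = Suc j")
        case True
        then have "N + m \<le> j" "j < 2*N + m" using Ym mixed by auto
        then have "(\<Sum>b<N. eblock_path ?B ?s (qint_xi N) (qint_xi N) ?c N j b) = 0"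
          using Ym V N ym_mixed_xi_vanishes[of N m j] by simp
        then show ?thesis using True mixed by (simp only: eblock_pow_mixed if_cancel)
      qed (use mixed in \<open>simp add: eblock_pow_mixed\<close>)
    qed
  qed
  then show ?thesis using ij mpow_eblock[of i ?A ?B j] unfolding qdim_eq_alpha_beta[OF V] E_shape_def
    by simp
qed

lemma F_shape_xi_nilpotent:
  assumes N: "2 \<le> N" and V: "admissible N V" and ij: "i < qdim N V" "j < qdim N V"
  shows "mpow (qdim N V) (F_shape N V (qbinom_xi N) (qint_xi N)) N i j = 0"
proof -
  let ?A = "alpha_dim N V" and ?B = "beta_dim N V" and ?p = "F_pivot N V"
    and ?c = "F_coupling N V (qbinom_xi N)"
  have "fblock_pow ?A ?B ?p (\<lambda>l. qint_xi N (?A - 1 - l)) (\<lambda>k. qint_xi N (?B - 1 - k)) ?c N i j = 0"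
  proof (cases "j < ?A \<and> ?A \<le> i")
    case False
    then show ?thesis using N by (intro fblock_pow_xi_unmixed) auto
  next
    case mixed: True
    show ?thesis
    proof (cases V)
      case (W m)
      then show ?thesis using mixed by (simp add: fblock_pow_mixed)
    next
      case (Yp m)
      then have "N \<noteq> (?p - j) + Suc (i - ?A)" using mixed V ij by auto
      then show ?thesis using mixed by (simp add: fblock_pow_mixed)
    next
      case (Ym m)
      have "(\<Prod>t<i - ?A. qint_xi N (?B - 1 - t)) = 0" if "N = (?p - j) + Suc (i - ?A)" "j \<le> ?p"
      proof -
        have "N - m - 1 < i - ?A" "?B - 1 - (N - m - 1) = N" using that Ym V by auto
        then show ?thesis using qint_xi_eq_0[of N N] N by (intro prod_zero bexI[of _ "N - m - 1"]) auto
      qed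
      then show ?thesis using mixed by (auto simp: fblock_pow_mixed)
    qed
  qed
  then show ?thesis using ij mpow_fblock[of i ?A ?B] unfolding qdim_eq_alpha_beta[OF V] F_shape_def
    by simp
qed

section \<open>Holomorphic dependence on \<open>q\<close>\<close>

text \<open>\<open>qregular K q\<close>: the \<open>q\<close>-integers \<open>[1], \<dots>, [K - 1]\<close> are defined and nonzero at \<open>q\<close>.\<close>
definition qregular :: "nat \<Rightarrow> complex \<Rightarrow> bool" where
  "qregular K q \<longleftrightarrow> q \<noteq> 0 \<and> (\<forall>k\<in>{1..<K}. q ^ (2*k) \<noteq> 1)"

lemma open_qregular: "open {q. qregular K q}"
  unfolding qregular_def Collect_conj_eq Collect_ball_eq
  by (intro open_Int open_INT finite_atLeastLessThan ballI open_Collect_neq continuous_intros)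

lemma qregular_xi: assumes "0 < N" shows "qregular N (xi N)"
  using assms xi_nonzero[of N] xi_power_double_eq_1_iff[OF assms] by (auto simp: qregular_def dest: dvd_imp_le)

lemma eventually_qregular: "eventually (qregular K) (at (xi N))"
proof -
  have "eventually (\<lambda>q. q \<in> {q. q \<noteq> 0}) (at (xi N))"
    by (rule eventually_at_in_open') (auto simp: xi_nonzero open_Collect_neq)
  moreover have "eventually (\<lambda>q. q ^ (2*k) \<noteq> 1) (at (xi N))" if "k \<in> {1..<K}" for k
  proof -
    have "finite {z::complex. z ^ (2*k) = 1}" using that by (intro finite_roots_unity) auto
    then have "\<not> xi N islimpt {z::complex. z ^ (2*k) = 1}" by (rule islimpt_finite)
    then show ?thesis unfolding islimpt_iff_eventually by simp
  qed
  then have "eventually (\<lambda>q. \<forall>k\<in>{1..<K}. q ^ (2*k) \<noteq> 1) (at (xi N))"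
    by (intro eventually_ball_finite) auto
  ultimately show ?thesis unfolding qregular_def by eventually_elim auto
qed

lemma qregular_qcurly_nonzero: assumes "qregular K q" "1 \<le> k" "k < K" shows "qcurly k q \<noteq> 0"
  using assms qcurly_eq_0_iff[of q k] by (auto simp: qregular_def)

lemma qregular_qint_fact_nonzero: assumes "qregular K q" "c < K" shows "qint_fact c q \<noteq> 0"
  using assms qregular_qcurly_nonzero[OF assms(1)] by (auto simp: qint_fact_def qint_def)

lemma holomorphic_qcurly: "(\<lambda>q. qcurly k q) holomorphic_on {q. qregular K q}"
  unfolding qcurly_def by (intro holomorphic_intros) (auto simp: qregular_def)

lemma holomorphic_qint: assumes "2 \<le> K" shows "(\<lambda>q. qint k q) holomorphic_on {q. qregular K q}"
  unfolding qint_def using assms by (intro holomorphic_intros holomorphic_qcurly qregular_qcurly_nonzero) auto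

lemma holomorphic_qint_fact: assumes "2 \<le> K" shows "(\<lambda>q. qint_fact c q) holomorphic_on {q. qregular K q}"
  unfolding qint_fact_def using assms by (intro holomorphic_intros holomorphic_qint)

lemma holomorphic_qbinom_reduced:
  assumes "2 \<le> K" "a - b < K" shows "(\<lambda>q. qbinom_reduced a b q) holomorphic_on {q. qregular K q}"
  unfolding qbinom_reduced_def using assms
  by (intro holomorphic_intros holomorphic_qint holomorphic_qint_fact qregular_qint_fact_nonzero) auto

lemma holomorphic_Rcoef: assumes "n < K" shows "(\<lambda>q. Rcoef n q) holomorphic_on {q. qregular K q}"
proof -
  have "qcurly_fact n q \<noteq> 0" if "qregular K q" for q
    using qregular_qcurly_nonzero[OF that] assms by (auto simp: qcurly_fact_def)
  then show ?thesis unfolding Rcoef_def qcurly_fact_def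
    by (intro holomorphic_intros holomorphic_qcurly) (auto simp: qregular_def qcurly_fact_def)
qed

lemma holomorphic_mpow:
  assumes "\<And>i j. (\<lambda>q. M q i j) holomorphic_on S"
  shows "(\<lambda>q. mpow d (M q) n i j) holomorphic_on S"
proof (induction n arbitrary: i j)
  case (Suc n)
  then show ?case by (simp, intro holomorphic_intros assms Suc)
qed simp

lemma holomorphic_if: "f holomorphic_on S \<Longrightarrow> g holomorphic_on S \<Longrightarrow> (\<lambda>q. if P then f q else g q) holomorphic_on S"
  by (cases P) auto

definition E_hol :: "nat \<Rightarrow> qmod \<Rightarrow> complex \<Rightarrow> nat \<Rightarrow> nat \<Rightarrow> complex" where
  "E_hol N V q = E_shape N V (\<lambda>a b. qbinom_reduced a b q) (\<lambda>k. qint k q)"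

definition F_hol :: "nat \<Rightarrow> qmod \<Rightarrow> complex \<Rightarrow> nat \<Rightarrow> nat \<Rightarrow> complex" where
  "F_hol N V q = F_shape N V (\<lambda>a b. qbinom_reduced a b q) (\<lambda>k. qint k q)"

lemma holomorphic_E_hol:
  assumes "2 \<le> N" "admissible N V"
  shows "(\<lambda>q. E_hol N V q i j) holomorphic_on {q. qregular N q}"
proof -
  have "(\<lambda>q. E_coupling N V (\<lambda>a b. qbinom_reduced a b q) l) holomorphic_on {q. qregular N q}" for l
    using assms by (cases V) (auto intro!: holomorphic_if holomorphic_qbinom_reduced)
  then show ?thesis unfolding E_hol_def E_shape_def eblock_def
    by (intro holomorphic_if holomorphic_intros holomorphic_qint assms(1))
qed

lemma holomorphic_F_hol:
  assumes "2 \<le> N" "admissible N V"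
  shows "(\<lambda>q. F_hol N V q i j) holomorphic_on {q. qregular N q}"
proof -
  have "(\<lambda>q. F_coupling N V (\<lambda>a b. qbinom_reduced a b q)) holomorphic_on {q. qregular N q}"
    using assms by (cases V) (auto intro!: holomorphic_qbinom_reduced)
  then show ?thesis unfolding F_hol_def F_shape_def fblock_def
    by (intro holomorphic_if holomorphic_intros holomorphic_qint assms(1))
qed

lemma qbinom_eq_reduced:
  assumes "b \<le> a" "qint_fact b q \<noteq> 0" shows "qbinom a b q = qbinom_reduced a b q"
proof -
  have "{1..a} = {1..b} \<union> {b<..a}" "{1..b} \<inter> {b<..a} = {}" using assms(1) by auto
  then have "qint_fact a q = qint_fact b q * (\<Prod>k\<in>{b<..a}. qint k q)"
    unfolding qint_fact_def by (simp add: prod.union_disjoint)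
  then show ?thesis using assms(2) by (simp add: qbinom_def qbinom_reduced_def)
qed

lemma Ematq_eq_E_hol:
  assumes "admissible N V" "qregular (2*N + 1) q"
  shows "Ematq N V q = E_hol N V q"
proof -
  have "E_coupling N V (\<lambda>a b. qbinom a b q) = E_coupling N V (\<lambda>a b. qbinom_reduced a b q)"
    using assms qregular_qint_fact_nonzero[OF assms(2)]
    by (cases V) (auto intro!: ext qbinom_eq_reduced)
  then show ?thesis unfolding Ematq_eq_E_shape[OF assms(1)] E_hol_def E_shape_def by simp
qed

lemma Fmatq_eq_F_hol:
  assumes "admissible N V" "qregular (2*N + 1) q"
  shows "Fmatq N V q = F_hol N V q"
proof -
  have "F_coupling N V (\<lambda>a b. qbinom a b q) = F_coupling N V (\<lambda>a b. qbinom_reduced a b q)"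
    using assms qregular_qint_fact_nonzero[OF assms(2)]
    by (cases V) (auto intro!: qbinom_eq_reduced)
  then show ?thesis unfolding Fmatq_eq_F_shape[OF assms(1)] F_hol_def F_shape_def by simp
qed

lemma holomorphic_tendsto_xi:
  assumes "f holomorphic_on {q. qregular N q}" "0 < N"
  shows "(f \<longlongrightarrow> f (xi N)) (at (xi N))"
  using assms holomorphic_on_imp_continuous_on open_qregular qregular_xi
  by (metis continuous_on_eq_continuous_at isContD mem_Collect_eq)

lemma Emat_spec_eq_E_hol:
  assumes "2 \<le> N" "admissible N V"
  shows "Emat_spec N V = E_hol N V (xi N)"
proof (intro ext)
  fix i j
  have "((\<lambda>q. E_hol N V q i j) \<longlongrightarrow> E_hol N V (xi N) i j) (at (xi N))"
    using holomorphic_tendsto_xi[OF holomorphic_E_hol[OF assms]] assms by simp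
  then have "((\<lambda>q. Ematq N V q i j) \<longlongrightarrow> E_hol N V (xi N) i j) (at (xi N))"
    by (rule Lim_transform_eventually)
       (rule eventually_mono[OF eventually_qregular[of "2*N + 1"]], simp add: Ematq_eq_E_hol[OF assms(2)])
  then show "Emat_spec N V i j = E_hol N V (xi N) i j"
    unfolding Emat_spec_def by (intro tendsto_Lim) auto
qed

lemma Fmat_spec_eq_F_hol:
  assumes "2 \<le> N" "admissible N V"
  shows "Fmat_spec N V = F_hol N V (xi N)"
proof (intro ext)
  fix i j
  have "((\<lambda>q. F_hol N V q i j) \<longlongrightarrow> F_hol N V (xi N) i j) (at (xi N))"
    using holomorphic_tendsto_xi[OF holomorphic_F_hol[OF assms]] assms by simp
  then have "((\<lambda>q. Fmatq N V q i j) \<longlongrightarrow> F_hol N V (xi N) i j) (at (xi N))"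
    by (rule Lim_transform_eventually)
       (rule eventually_mono[OF eventually_qregular[of "2*N + 1"]], simp add: Fmatq_eq_F_hol[OF assms(2)])
  then show "Fmat_spec N V i j = F_hol N V (xi N) i j"
    unfolding Fmat_spec_def by (intro tendsto_Lim) auto
qed

section \<open>Orders of vanishing at the root of unity\<close>

text \<open>Since \<open>X(a)\<^sup>K = 0\<close>, \<open>X\<^sup>K = (q - a) G\<close> with \<open>G\<close> holomorphic; now write
  \<open>n = (n div K) K + n mod K\<close>.\<close>
lemma mpow_factor_power:
  assumes hol: "\<And>i j. (\<lambda>q. X q i j) holomorphic_on S" and "open S"
    and nil: "\<And>i j. i < d \<Longrightarrow> j < d \<Longrightarrow> mpow d (X a) K i j = 0"
  shows "\<exists>H. \<forall>i<d. \<forall>j<d. (\<lambda>q. H i j q) holomorphic_on S \<and>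
            (\<forall>q\<in>S. mpow d (X q) n i j = (q - a) ^ (n div K) * H i j q)"
proof -
  define f where "f i j = (\<lambda>q. mpow d (X q) K i j)" for i j
  define G where "G i j = (\<lambda>z. if z = a then deriv (f i j) a else (f i j z - f i j a) / (z - a))" for i j
  have G_hol: "(\<lambda>q. G i j q) holomorphic_on S" for i j
    unfolding G_def by (rule pole_lemma_open) (auto simp: f_def \<open>open S\<close> intro: holomorphic_mpow hol)
  have G_factor: "mpow d (X q) K i j = (q - a) * G i j q" if "i < d" "j < d" for i j q
    using nil that by (cases "q = a") (simp_all add: G_def f_def)
  have "\<exists>H. \<forall>i<d. \<forall>j<d. (\<lambda>q. H i j q) holomorphic_on S \<and>
            (\<forall>q\<in>S. mpow d (X q) (t * K + r) i j = (q - a) ^ t * H i j q)" for t r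
  proof (induction t)
    case 0
    show ?case by (rule exI[of _ "\<lambda>i j q. mpow d (X q) r i j"]) (auto intro: holomorphic_mpow hol)
  next
    case (Suc t)
    then obtain H where H: "\<forall>i<d. \<forall>j<d. (\<lambda>q. H i j q) holomorphic_on S \<and>
            (\<forall>q\<in>S. mpow d (X q) (t * K + r) i j = (q - a) ^ t * H i j q)" by blast
    show ?case
    proof (rule exI[of _ "\<lambda>i j q. \<Sum>l<d. G i l q * H l j q"], intro allI impI conjI ballI)
      fix i j assume ij: "i < d" "j < d"
      show "(\<lambda>q. \<Sum>l<d. G i l q * H l j q) holomorphic_on S"
        using H ij by (intro holomorphic_intros G_hol) auto
      fix q assume q: "q \<in> S"
      have "mpow d (X q) (Suc t * K + r) i j = mpow d (X q) (K + (t * K + r)) i j"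
        by (simp add: add.assoc)
      also have "\<dots> = (\<Sum>l<d. mpow d (X q) K i l * mpow d (X q) (t * K + r) l j)"
        by (rule mpow_add) (use ij in auto)
      also have "\<dots> = (\<Sum>l<d. ((q - a) * G i l q) * ((q - a) ^ t * H l j q))"
        by (rule sum.cong) (use ij q H G_factor in auto)
      also have "\<dots> = (q - a) ^ Suc t * (\<Sum>l<d. G i l q * H l j q)"
        by (simp add: sum_distrib_left ac_simps)
      finally show "mpow d (X q) (Suc t * K + r) i j = (q - a) ^ Suc t * (\<Sum>l<d. G i l q * H l j q)" .
    qed
  qed
  then show ?thesis using div_mult_mod_eq[of n K] by metis
qed

lemma qcurly_factor_at_xi:
  assumes "0 < N" "1 \<le> k"
  obtains v where "isCont v (xi N)" "v (xi N) \<noteq> 0"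
    "\<And>q. q \<noteq> 0 \<Longrightarrow> qcurly k q = (q - xi N) ^ (if N dvd k then 1 else 0) * v q"
proof (cases "N dvd k")
  case False
  have "isCont (qcurly k) (xi N)" unfolding qcurly_def[abs_def] using xi_nonzero[of N]
    by (intro continuous_intros) auto
  moreover have "qcurly k (xi N) \<noteq> 0" using qcurly_xi_eq_0_iff[OF assms(1)] False by simp
  ultimately show ?thesis using False that[of "qcurly k"] by simp
next
  case True
  define v where "v q = inverse q ^ k * (\<Sum>i<2*k. xi N ^ (2*k - Suc i) * q ^ i)" for q
  have "isCont v (xi N)" unfolding v_def using xi_nonzero[of N] by (intro continuous_intros) auto
  moreover have "v (xi N) \<noteq> 0"
  proof -
    have "(\<Sum>i<2*k. xi N ^ (2*k - Suc i) * xi N ^ i) = (\<Sum>i<2*k. xi N ^ (2*k - 1))"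
      by (rule sum.cong) (auto simp: power_add[symmetric])
    then have "v (xi N) = inverse (xi N) ^ k * (of_nat (2*k) * xi N ^ (2*k - 1))"
      by (simp add: v_def)
    then show ?thesis using xi_nonzero[of N] assms by simp
  qed
  moreover have "qcurly k q = (q - xi N) * v q" if "q \<noteq> 0" for q
  proof -
    have "xi N ^ (2*k) = 1" using xi_power_double_eq_1_iff[OF assms(1)] True by simp
    then have "q ^ (2*k) - 1 = (q - xi N) * (\<Sum>i<2*k. xi N ^ (2*k - Suc i) * q ^ i)"
      using power_diff_sumr2[of q "2*k" "xi N"] by simp
    moreover have "qcurly k q = inverse q ^ k * (q ^ (2*k) - 1)"
      using that by (simp add: qcurly_def power_inverse field_simps power_mult power2_eq_square)
    ultimately show ?thesis by (simp add: v_def)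
  qed
  ultimately show ?thesis using True that[of v] by simp
qed

text \<open>\<open>{n}!\<close> has a zero of order at most \<open>n div N\<close> at \<open>\<xi>\<close>: only the factors \<open>{k}\<close> with
  \<open>N dvd k\<close> vanish there, each simply.\<close>
lemma qcurly_fact_factor_at_xi:
  assumes "0 < N"
  shows "\<exists>p u. p \<le> n div N \<and> isCont u (xi N) \<and> u (xi N) \<noteq> 0 \<and>
     (\<forall>q. q \<noteq> 0 \<longrightarrow> qcurly_fact n q = (q - xi N) ^ p * u q)"
proof (induction n)
  case 0
  show ?case by (rule exI[of _ 0], rule exI[of _ "\<lambda>q. 1"]) (auto simp: qcurly_fact_def)
next
  case (Suc n)
  obtain p u where pu: "p \<le> n div N" "isCont u (xi N)" "u (xi N) \<noteq> 0"
     "\<forall>q. q \<noteq> 0 \<longrightarrow> qcurly_fact n q = (q - xi N) ^ p * u q" using Suc.IH by blast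
  obtain v where v: "isCont v (xi N)" "v (xi N) \<noteq> 0"
     "\<And>q. q \<noteq> 0 \<Longrightarrow> qcurly (Suc n) q = (q - xi N) ^ (if N dvd Suc n then 1 else 0) * v q"
    using qcurly_factor_at_xi[OF assms, of "Suc n"] by auto
  define p' where "p' = p + (if N dvd Suc n then 1 else 0)"
  have "p' \<le> Suc n div N"
    using pu(1) div_le_mono[of n "Suc n" N] by (auto simp: p'_def div_Suc dvd_eq_mod_eq_0)
  moreover have "qcurly_fact (Suc n) q = (q - xi N) ^ p' * (u q * v q)" if "q \<noteq> 0" for q
    using pu(4) v(3) that by (simp add: qcurly_fact_def p'_def power_add ac_simps)
  moreover have "isCont (\<lambda>q. u q * v q) (xi N)" using pu v by (intro continuous_intros)
  ultimately show ?case using pu(3) v(2) by (intro exI[of _ p'] exI[of _ "\<lambda>q. u q * v q"]) auto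
qed

lemma tendsto_zero_power_factor:
  fixes f g :: "complex \<Rightarrow> complex"
  assumes "eventually (\<lambda>q. f q = (q - a) ^ k * g q) (at a)" "(g \<longlongrightarrow> L) (at a)" "0 < k"
  shows "(f \<longlongrightarrow> 0) (at a)"
proof -
  have "((\<lambda>q. (q - a) ^ k * g q) \<longlongrightarrow> (a - a) ^ k * L) (at a)"
    by (intro tendsto_intros assms(2))
  then have "((\<lambda>q. (q - a) ^ k * g q) \<longlongrightarrow> 0) (at a)" using assms(3) by (simp add: zero_power)
  then show ?thesis by (rule Lim_transform_eventually) (use assms(1) in \<open>auto elim: eventually_mono\<close>)
qed

section \<open>Specialization of the \<open>R\<close>-matrix\<close>

lemma R_term_hol_tendsto_0:
  assumes N: "2 \<le> N" and adm: "admissible N V1" "admissible N V2"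
    and ij: "i1 < qdim N V1" "j1 < qdim N V1" "i2 < qdim N V2" "j2 < qdim N V2" and "N \<le> n"
  shows "((\<lambda>q. Rcoef n q * mpow (qdim N V1) (E_hol N V1 q) n i1 j1 * mpow (qdim N V2) (F_hol N V2 q) n i2 j2)
     \<longlongrightarrow> 0) (at (xi N))"
proof -
  have N0: "0 < N" using N by simp
  define f where "f = n div N"
  obtain H1 where H1: "\<forall>i<qdim N V1. \<forall>j<qdim N V1. (\<lambda>q. H1 i j q) holomorphic_on {q. qregular N q} \<and>
      (\<forall>q\<in>{q. qregular N q}. mpow (qdim N V1) (E_hol N V1 q) n i j = (q - xi N) ^ f * H1 i j q)"
    using mpow_factor_power[of "E_hol N V1" "{q. qregular N q}" "qdim N V1" "xi N" N n]
      holomorphic_E_hol[OF N adm(1)] open_qregular E_shape_xi_nilpotent[OF N adm(1)]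
    unfolding E_hol_def f_def by blast
  obtain H2 where H2: "\<forall>i<qdim N V2. \<forall>j<qdim N V2. (\<lambda>q. H2 i j q) holomorphic_on {q. qregular N q} \<and>
      (\<forall>q\<in>{q. qregular N q}. mpow (qdim N V2) (F_hol N V2 q) n i j = (q - xi N) ^ f * H2 i j q)"
    using mpow_factor_power[of "F_hol N V2" "{q. qregular N q}" "qdim N V2" "xi N" N n]
      holomorphic_F_hol[OF N adm(2)] open_qregular F_shape_xi_nilpotent[OF N adm(2)]
    unfolding F_hol_def f_def by blast
  obtain p u where pu: "p \<le> f" "isCont u (xi N)" "u (xi N) \<noteq> 0"
      "\<forall>q. q \<noteq> 0 \<longrightarrow> qcurly_fact n q = (q - xi N) ^ p * u q"
    using qcurly_fact_factor_at_xi[OF N0, of n] unfolding f_def by blast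
  define K where "K q = qcurly 1 q ^ (2*n) * q ^ (n * (n - 1) div 2) * H1 i1 j1 q * H2 i2 j2 q / u q" for q
  have near: "eventually (\<lambda>q. q \<in> {q. qregular N q} - {xi N}) (at (xi N))"
    by (rule eventually_at_in_open) (use open_qregular qregular_xi[OF N0] in auto)
  show ?thesis
  proof (rule tendsto_zero_power_factor)
    show "eventually (\<lambda>q. Rcoef n q * mpow (qdim N V1) (E_hol N V1 q) n i1 j1 * mpow (qdim N V2) (F_hol N V2 q) n i2 j2
        = (q - xi N) ^ (2*f - p) * K q) (at (xi N))"
      using near
    proof eventually_elim
      case (elim q)
      then have "q - xi N \<noteq> 0" "q \<noteq> 0" "(q - xi N) ^ (2*f - p) * (q - xi N) ^ p = (q - xi N) ^ f * (q - xi N) ^ f"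
        using pu(1) by (auto simp: qregular_def power_add[symmetric] mult_2)
      then show ?case using elim H1 H2 ij pu(4)
        by (cases "u q = 0") (simp_all add: Rcoef_def K_def field_simps)
    qed
    have "(\<lambda>q. H1 i1 j1 q) \<midarrow>xi N\<rightarrow> H1 i1 j1 (xi N)" "(\<lambda>q. H2 i2 j2 q) \<midarrow>xi N\<rightarrow> H2 i2 j2 (xi N)"
      using H1 H2 ij holomorphic_tendsto_xi[OF _ N0] by blast+
    then show "K \<midarrow>xi N\<rightarrow> K (xi N)" unfolding K_def[abs_def]
      using holomorphic_tendsto_xi[OF holomorphic_qcurly N0] pu(2,3)
      by (intro tendsto_intros) (auto simp: isCont_def)
    have "1 \<le> f" using div_le_mono[OF \<open>N \<le> n\<close>, of N] N0 by (simp add: f_def)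
    then show "0 < 2*f - p" using pu(1) by simp
  qed
qed

lemma R_term_tendsto:
  assumes N: "2 \<le> N" and adm: "admissible N V1" "admissible N V2"
    and ij: "i1 < qdim N V1" "j1 < qdim N V1" "i2 < qdim N V2" "j2 < qdim N V2"
  shows "((\<lambda>q. Rcoef n q * mpow (qdim N V1) (Ematq N V1 q) n i1 j1 * mpow (qdim N V2) (Fmatq N V2 q) n i2 j2)
     \<longlongrightarrow> (if n < N then Rcoef n (xi N) * mpow (qdim N V1) (Emat_spec N V1) n i1 j1
                               * mpow (qdim N V2) (Fmat_spec N V2) n i2 j2 else 0)) (at (xi N))"
proof -
  let ?T = "\<lambda>q. Rcoef n q * mpow (qdim N V1) (E_hol N V1 q) n i1 j1 * mpow (qdim N V2) (F_hol N V2 q) n i2 j2"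
  have "(?T \<longlongrightarrow> (if n < N then ?T (xi N) else 0)) (at (xi N))"
  proof (cases "n < N")
    case True
    have "?T holomorphic_on {q. qregular N q}"
      by (intro holomorphic_intros holomorphic_Rcoef True holomorphic_mpow holomorphic_E_hol
          holomorphic_F_hol N adm)
    from holomorphic_tendsto_xi[OF this] show ?thesis using N True by simp
  next
    case False
    then show ?thesis using R_term_hol_tendsto_0[OF N adm ij] by simp
  qed
  then show ?thesis
    unfolding Emat_spec_eq_E_hol[OF N adm(1)] Fmat_spec_eq_F_hol[OF N adm(2)]
    by (rule Lim_transform_eventually)
       (rule eventually_mono[OF eventually_qregular[of "2*N + 1"]],
        simp add: Ematq_eq_E_hol[OF adm(1)] Fmatq_eq_F_hol[OF adm(2)])
qed

lemma R_series_finite: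
  assumes "admissible N V1" "i1 < qdim N V1" "j1 < qdim N V1" "qdim N V1 \<le> D"
  shows "(\<Sum>n. Rcoef n q * mpow (qdim N V1) (Ematq N V1 q) n i1 j1 * mpow (qdim N V2) (Fmatq N V2 q) n i2 j2)
    = (\<Sum>n<D. Rcoef n q * mpow (qdim N V1) (Ematq N V1 q) n i1 j1 * mpow (qdim N V2) (Fmatq N V2 q) n i2 j2)"
proof (rule suminf_finite)
  fix n assume "n \<notin> {..<D}"
  then show "Rcoef n q * mpow (qdim N V1) (Ematq N V1 q) n i1 j1 * mpow (qdim N V2) (Fmatq N V2 q) n i2 j2 = 0"
    using assms mpow_E_shape_beyond unfolding Ematq_eq_E_shape[OF assms(1)] by simp
qed simp

lemma xi_half_square: "xi_half N ^ 2 = xi N"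
proof -
  have "xi_half N ^ 2 = exp (of_nat 2 * (pi * \<i> / of_nat (2 * N)))"
    unfolding xi_half_def by (simp only: exp_of_nat_mult)
  also have "\<dots> = xi N" unfolding xi_def by (cases "N = 0") (simp_all add: field_simps)
  finally show ?thesis .
qed

lemma filterlim_square_at_xi_half: "filterlim (\<lambda>s. s ^ 2) (at (xi N)) (at (xi_half N))"
proof -
  have "((\<lambda>s::complex. s ^ 2) \<longlongrightarrow> xi_half N ^ 2) (at (xi_half N))"
    by (intro tendsto_intros)
  then have "((\<lambda>s::complex. s ^ 2) \<longlongrightarrow> xi N) (at (xi_half N))"
    by (simp add: xi_half_square)
  moreover have "eventually (\<lambda>s. s \<noteq> - xi_half N \<and> s \<noteq> xi_half N) (at (xi_half N))"
    using eventually_at_in_open'[OF open_Collect_neq[of "\<lambda>s. s" "\<lambda>_. - xi_half N"]]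
    by (auto simp: xi_half_def eventually_at_filter elim: eventually_mono)
  then have "eventually (\<lambda>s. s ^ 2 \<noteq> xi N) (at (xi_half N))"
    by eventually_elim (auto simp: xi_half_square[symmetric] power2_eq_iff)
  ultimately show ?thesis by (simp add: filterlim_at)
qed

theorem mainTheorem5:
  fixes N :: nat and V1 V2 :: qmod and i1 i2 j1 j2 :: nat
  assumes "N \<ge> 2"
    and "admissible N V1" and "admissible N V2"
    and "i1 < qdim N V1" and "j1 < qdim N V1"
    and "i2 < qdim N V2" and "j2 < qdim N V2"
  shows "((\<lambda>s. Rgen N V1 V2 s i1 i2 j1 j2) \<longlongrightarrow> Rres N V1 V2 i1 i2 j1 j2) (at (xi_half N))"
proof -
  let ?T = "\<lambda>n q. Rcoef n q * mpow (qdim N V1) (Ematq N V1 q) n i1 j1 * mpow (qdim N V2) (Fmatq N V2 q) n i2 j2"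
  let ?R = "\<lambda>n. Rcoef n (xi N) * mpow (qdim N V1) (Emat_spec N V1) n i1 j1 * mpow (qdim N V2) (Fmat_spec N V2) n i2 j2"
  let ?w = "qwt N V1 i1 * qwt N V2 i2"
  define D where "D = qdim N V1 + N"
  have Rgen: "Rgen N V1 V2 s i1 i2 j1 j2 = s powi ?w * (\<Sum>n<D. ?T n (s^2))" for s
    unfolding Rgen_def using R_series_finite[OF assms(2,4,5)] by (simp add: D_def)
  have "(\<Sum>n<D. if n < N then ?R n else 0) = (\<Sum>n\<in>{n\<in>{..<D}. n < N}. ?R n)"
    by (rule sum.inter_filter[symmetric]) simp
  also have "{n\<in>{..<D}. n < N} = {..<N}" by (auto simp: D_def)
  finally have sum_eq: "(\<Sum>n<D. if n < N then ?R n else 0) = (\<Sum>n<N. ?R n)" .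
  have "((\<lambda>q. \<Sum>n<D. ?T n q) \<longlongrightarrow> (\<Sum>n<D. if n < N then ?R n else 0)) (at (xi N))"
    by (intro tendsto_sum R_term_tendsto assms)
  from filterlim_compose[OF this[unfolded sum_eq] filterlim_square_at_xi_half]
  have "((\<lambda>s. \<Sum>n<D. ?T n (s^2)) \<longlongrightarrow> (\<Sum>n<N. ?R n)) (at (xi_half N))" .
  moreover have "((\<lambda>s. s powi ?w) \<longlongrightarrow> xi_half N powi ?w) (at (xi_half N))"
    by (intro tendsto_power_int tendsto_ident_at) (simp add: xi_half_def)
  ultimately show ?thesis unfolding Rgen Rres_def by (intro tendsto_mult)
qed

end
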